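(* Let $\eta>0$, $\omega\in(0,1)$, $S\ge2$ an integer, and $x\in\mathbb R^d$. Let $C(x)$ denote the number of bits used by the ANQ (with bias $\eta$, compression rate $\omega$, and constellation of $S+1$ symbols) to quantize $x$ componentwise and encode the $d$ resulting indices. Then: (i) for the deterministic ANQ, $$C(x)\le3d\log_2(S+1)+d\log_2(S+1)\log_S\Big(2+\frac{\ln(1-\omega)+\ln\big(1+\frac{\omega\|x\|_2}{\sqrt d\,\eta}\big)}{\ln(1+\omega)-\ln(1-\omega)}\Big);$$ (ii) for the probabilistic ANQ, almost surely, $$C(x)\le3d\log_2(S+1)+d\log_2(S+1)\log_S\Big(2+\frac{\ln\big(1+\frac{\omega\|x\|_2}{\sqrt d\,\eta}\big)}{2\ln\big(\sqrt{1+\omega^2}+\omega\big)}\Big).$$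
   Context: ANQ (Adaptive encoding Non-uniform Quantizer) with parameters $\eta>0$, $\omega\in(0,1)$, applied componentwise to vectors in $\mathbb R^d$. Deterministic ANQ: scalar points $q_\ell=-q_{-\ell}=\frac{\eta}{\omega}[(\frac{1+\omega}{1-\omega})^\ell-1]$ ($\ell\ge0$); a scalar $x$ is mapped to index $\ell(x)=\mathrm{sign}(x)\lceil\frac{\ln(1-\omega)+\ln(1+\omega|x|/\eta)}{\ln(1+\omega)-\ln(1-\omega)}\rceil$ and value $q_{\ell(x)}$. Probabilistic ANQ: scalar points $q_\ell=-q_{-\ell}=\frac{\eta}{\omega}[(\sqrt{1+\omega^2}+\omega)^{2\ell}-1]$ ($\ell\ge0$); for $x\ge0$ let $\ell=\lceil\frac{\ln(1+\omega x/\eta)}{2\ln(\sqrt{1+\omega^2}+\omega)}\rceil$ and output index $\ell-1$ with probability $\frac{q_\ell-x}{q_\ell-q_{\ell-1}}$, index $\ell$ with probability $\frac{x-q_{\ell-1}}{q_\ell-q_{\ell-1}}$ (index $0$ for $x=0$); for $x<0$ use the negated index of $-x$. Encoding: symbols from $\{0,1,\dots,S\}$, each costing $\log_2(S+1)$ bits. Let $\tilde{\mathcal L}_{-1}=\emptyset$ and for $b\ge0$, $\tilde{\mathcal L}_b=\{-\lceil\frac{S^{b+1}-1}{2(S-1)}\rceil+1,\dots,\lfloor\frac{S^{b+1}-1}{2(S-1)}\rfloor\}$, $\mathcal L_b=\tilde{\mathcal L}_b\setminus\tilde{\mathcal L}_{b-1}$ (these partition $\mathbb Z$ and $|\mathcal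 L_b|=S^b$). An index $\ell\in\mathcal L_b$ is encoded by a unique string of $b$ symbols from $\{1,\dots,S\}$ followed by the symbol $0$, i.e., with $(b+1)\log_2(S+1)$ bits. The cost $C(x)$ of a vector is the sum of the costs of its $d$ component indices. *)

theory Defs
  imports "HOL-Analysis.Analysis" "HOL-Probability.Product_PMF"
begin

text \<open>Tilde L_b for b = 0,1,2,...; the set Tilde L_{-1} is empty.\<close>
definition Ltilde :: "nat \<Rightarrow> nat \<Rightarrow> int set" where
  "Ltilde S b =
     {- \<lceil>(real S ^ (b+1) - 1) / (2 * (real S - 1))\<rceil> + 1 ..
        \<lfloor>(real S ^ (b+1) - 1) / (2 * (real S - 1))\<rfloor>}"

definition Lset :: "nat \<Rightarrow> nat \<Rightarrow> int set" where
  "Lset S b = (if b = 0 then Ltilde S 0 else Ltilde S b - Ltilde S (b - 1))"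

text \<open>An index in L_b costs (b+1) symbols, each of log2(S+1) bits.\<close>
definition index_cost :: "nat \<Rightarrow> int \<Rightarrow> real" where
  "index_cost S l = real ((THE b. l \<in> Lset S b) + 1) * log 2 (real S + 1)"

definition vec_cost :: "nat \<Rightarrow> ('n::finite \<Rightarrow> int) \<Rightarrow> real" where
  "vec_cost S k = (\<Sum>i\<in>UNIV. index_cost S (k i))"

definition det_q :: "real \<Rightarrow> real \<Rightarrow> int \<Rightarrow> real" where
  "det_q \<eta> \<omega> l = (if l \<ge> 0
     then \<eta> / \<omega> * (((1 + \<omega>) / (1 - \<omega>)) ^ nat l - 1)
     else - (\<eta> / \<omega> * (((1 + \<omega>) / (1 - \<omega>)) ^ nat (- l) - 1)))"

definition det_index :: "real \<Rightarrow> real \<Rightarrow> real \<Rightarrow> int" where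
  "det_index \<eta> \<omega> x = (if x > 0 then 1 else if x < 0 then -1 else 0) *
     \<lceil>(ln (1 - \<omega>) + ln (1 + \<omega> * \<bar>x\<bar> / \<eta>)) / (ln (1 + \<omega>) - ln (1 - \<omega>))\<rceil>"

definition prob_q :: "real \<Rightarrow> real \<Rightarrow> int \<Rightarrow> real" where
  "prob_q \<eta> \<omega> l = (if l \<ge> 0
     then \<eta> / \<omega> * ((sqrt (1 + \<omega>^2) + \<omega>) ^ (2 * nat l) - 1)
     else - (\<eta> / \<omega> * ((sqrt (1 + \<omega>^2) + \<omega>) ^ (2 * nat (- l)) - 1)))"

definition prob_index_nonneg :: "real \<Rightarrow> real \<Rightarrow> real \<Rightarrow> int pmf" where
  "prob_index_nonneg \<eta> \<omega> x =
     (if x = 0 then return_pmf 0 else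
      (let l = \<lceil>ln (1 + \<omega> * x / \<eta>) / (2 * ln (sqrt (1 + \<omega>^2) + \<omega>))\<rceil>
       in map_pmf (\<lambda>up. if up then l else l - 1)
            (bernoulli_pmf ((x - prob_q \<eta> \<omega> (l - 1)) / (prob_q \<eta> \<omega> l - prob_q \<eta> \<omega> (l - 1))))))"

definition prob_index :: "real \<Rightarrow> real \<Rightarrow> real \<Rightarrow> int pmf" where
  "prob_index \<eta> \<omega> x =
     (if x \<ge> 0 then prob_index_nonneg \<eta> \<omega> x
      else map_pmf uminus (prob_index_nonneg \<eta> \<omega> (- x)))"

definition prob_index_vec :: "real \<Rightarrow> real \<Rightarrow> real ^ 'n \<Rightarrow> ('n::finite \<Rightarrow> int) pmf" where
  "prob_index_vec \<eta> \<omega> x = Pi_pmf UNIV 0 (\<lambda>i. prob_index \<eta> \<omega> (x $ i))"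

end

(* An index l is coded at the least level b whose interval contains it. That interval has
   radius about S^(b+1) / (2(S - 1)), so minimality gives b <= 2 + log_S (1 + |l|) and each
   index costs at most (3 + log_S (1 + |l|)) log_2 (S + 1) bits. For either quantizer,
   1 + |l| is at most 2 plus the unrounded index, u |-> 2 + (c + ln (1 + a u)) / L with
   u = |x_i|; composed with log_S this is concave, so by Jensen the sum over the components is
   bounded by d times its value at the mean of the |x_i|, which Cauchy-Schwarz bounds by
   ||x||_2 / sqrt d. *)
theory Submission
  imports Defs
begin

definition code_radius :: "nat \<Rightarrow> nat \<Rightarrow> real" where
  "code_radius S b = (real S ^ (b+1) - 1) / (2 * (real S - 1))"

lemma Ltilde_eq: "Ltilde S b = {- \<lceil>code_radius S b\<rceil> + 1 .. \<lfloor>code_radius S b\<rfloor>}"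
  by (simp add: Ltilde_def code_radius_def)

lemma code_radius_mono:
  assumes "S \<ge> 2" "b \<le> b'"
  shows "code_radius S b \<le> code_radius S b'"
proof -
  have "real S ^ (b+1) \<le> real S ^ (b'+1)"
    using assms by (intro power_increasing) auto
  then show ?thesis
    using assms unfolding code_radius_def by (intro divide_right_mono) auto
qed

lemma Ltilde_mono:
  assumes "S \<ge> 2" "b \<le> b'"
  shows "Ltilde S b \<subseteq> Ltilde S b'"
proof -
  have "\<lceil>code_radius S b\<rceil> \<le> \<lceil>code_radius S b'\<rceil>" "\<lfloor>code_radius S b\<rfloor> \<le> \<lfloor>code_radius S b'\<rfloor>"
    using code_radius_mono[OF assms] by (auto intro: ceiling_mono floor_mono)
  then show ?thesis unfolding Ltilde_eq by auto
qed

lemma mem_Ltilde: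
  assumes "real_of_int \<bar>l\<bar> + 1 \<le> code_radius S b"
  shows "l \<in> Ltilde S b"
  using assms unfolding Ltilde_eq by (auto; linarith)

lemma mem_Ltilde_double_abs:
  assumes "S \<ge> 2"
  shows "l \<in> Ltilde S (2 * nat \<bar>l\<bar> + 1)"
proof (rule mem_Ltilde)
  define n where "n = nat \<bar>l\<bar>"
  have "1 + real (2*n+2) * (real S - 1) \<le> (1 + (real S - 1)) ^ (2*n+2)"
    using assms by (intro Bernoulli_inequality) auto
  then have "(real n + 1) * (2 * (real S - 1)) \<le> real S ^ (2*n+2) - 1"
    by (simp add: algebra_simps)
  then have "real n + 1 \<le> code_radius S (2*n+1)"
    using assms by (simp add: code_radius_def field_simps)
  then show "real_of_int \<bar>l\<bar> + 1 \<le> code_radius S (2 * nat \<bar>l\<bar> + 1)"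
    by (simp add: n_def)
qed

definition code_level :: "nat \<Rightarrow> int \<Rightarrow> nat" where
  "code_level S l = (LEAST b. l \<in> Ltilde S b)"

lemma mem_Ltilde_code_level:
  assumes "S \<ge> 2"
  shows "l \<in> Ltilde S (code_level S l)"
  unfolding code_level_def using mem_Ltilde_double_abs[OF assms] by (rule LeastI)

lemma mem_Ltilde_iff_code_level_le:
  assumes "S \<ge> 2"
  shows "l \<in> Ltilde S b \<longleftrightarrow> code_level S l \<le> b"
proof
  show "l \<in> Ltilde S b \<Longrightarrow> code_level S l \<le> b"
    unfolding code_level_def by (rule Least_le)
  show "code_level S l \<le> b \<Longrightarrow> l \<in> Ltilde S b"
    using Ltilde_mono[OF assms] mem_Ltilde_code_level[OF assms] by blast
qed

lemma mem_Lset_iff: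
  assumes "S \<ge> 2"
  shows "l \<in> Lset S b \<longleftrightarrow> b = code_level S l"
  by (cases b) (auto simp: Lset_def mem_Ltilde_iff_code_level_le[OF assms])

lemma index_cost_eq:
  assumes "S \<ge> 2"
  shows "index_cost S l = real (code_level S l + 1) * log 2 (real S + 1)"
  unfolding index_cost_def mem_Lset_iff[OF assms] by simp

lemma code_level_le:
  assumes "S \<ge> 2"
  shows "real (code_level S l) \<le> 2 + log (real S) (1 + real_of_int \<bar>l\<bar>)"
proof (cases "code_level S l")
  case 0
  then show ?thesis using assms by simp
next
  case (Suc b)
  define m where "m = 1 + real_of_int \<bar>l\<bar>"
  have S: "real S \<ge> 2" using assms by simp
  have "l \<notin> Ltilde S b"
    using mem_Ltilde_iff_code_level_le[OF assms] Suc by simp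
  then have "code_radius S b < m"
    using mem_Ltilde m_def by force
  then have "real S ^ Suc b - 1 < m * (2 * (real S - 1))"
    using S by (simp add: code_radius_def divide_less_eq)
  also have "\<dots> \<le> m * real S ^ 2 - 1"
  proof -
    have "m \<ge> 1" by (simp add: m_def)
    then have "0 \<le> (m - 1) + m * (real S - 1)^2" by simp
    then show ?thesis by (simp add: power2_eq_square algebra_simps)
  qed
  finally have "real S ^ Suc b < m * real S ^ 2" by simp
  moreover have "m > 0" by (simp add: m_def add_pos_nonneg)
  ultimately have "log (real S) (real S ^ Suc b) < log (real S) (m * real S ^ 2)"
    using S by (subst log_less_cancel_iff) auto
  also have "\<dots> = log (real S) m + 2"
    using S \<open>m > 0\<close> by (simp add: log_mult)
  finally show ?thesis
    using S Suc by (simp add: m_def del: power_Suc)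
qed

lemma index_cost_le:
  assumes "S \<ge> 2"
  shows "index_cost S l \<le> (3 + log (real S) (1 + real_of_int \<bar>l\<bar>)) * log 2 (real S + 1)"
  unfolding index_cost_eq[OF assms]
  using code_level_le[OF assms, of l] by (intro mult_right_mono) auto

text \<open>Deterministic ANQ: c = ln (1 - \<omega>), L = ln (1 + \<omega>) - ln (1 - \<omega>);
  probabilistic ANQ: c = 0, L = 2 ln (sqrt (1 + \<omega>^2) + \<omega>); in both a = \<omega> / \<eta>.\<close>
definition index_bound :: "real \<Rightarrow> real \<Rightarrow> real \<Rightarrow> real \<Rightarrow> real" where
  "index_bound c L a u = 2 + (c + ln (1 + a * u)) / L"

lemma index_bound_gt_one:
  assumes "a > 0" "L > 0" "-L < c" "u \<ge> 0"
  shows "index_bound c L a u > 1"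
proof -
  have "ln (1 + a * u) \<ge> 0" using assms by simp
  then have "-L < c + ln (1 + a * u)" using assms by linarith
  then have "(c + ln (1 + a * u)) / L > -1" using assms by (simp add: field_simps)
  then show ?thesis unfolding index_bound_def by simp
qed

lemma index_bound_mono:
  assumes "a > 0" "L > 0" "0 \<le> u" "u \<le> v"
  shows "index_bound c L a u \<le> index_bound c L a v"
proof -
  have "ln (1 + a * u) \<le> ln (1 + a * v)"
    using assms by (subst ln_le_cancel_iff) (auto intro: add_pos_nonneg mult_left_mono)
  then show ?thesis
    unfolding index_bound_def using assms by (simp add: divide_right_mono)
qed

text \<open>Concavity of u \<mapsto> log b (index_bound c L a u), in tangent-line form.\<close>
lemma log_index_bound_le_tangent:
  assumes "b > 1" "a > 0" "L > 0" "-L < c" "t \<ge> 0" "t0 \<ge> 0"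
  defines "G \<equiv> index_bound c L a"
  shows "log b (G t) \<le> log b (G t0) + a * (t - t0) / ((1 + a * t0) * L * G t0 * ln b)"
proof -
  have G: "G t > 0" "G t0 > 0"
    using index_bound_gt_one assms unfolding G_def by force+
  have p: "1 + a * t > 0" "1 + a * t0 > 0"
    using assms by (auto intro: add_pos_nonneg)
  have "G t - G t0 = (ln (1 + a * t) - ln (1 + a * t0)) / L"
    unfolding G_def index_bound_def using assms by (simp add: field_simps)
  also have "\<dots> \<le> ((1 + a * t) - (1 + a * t0)) / (1 + a * t0) / L"
    using ln_diff_le[OF p] assms by (intro divide_right_mono) auto
  finally have "G t - G t0 \<le> a * (t - t0) / ((1 + a * t0) * L)"
    by (simp add: algebra_simps)
  then have "ln (G t) - ln (G t0) \<le> a * (t - t0) / ((1 + a * t0) * L) / G t0"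
    using ln_diff_le[OF G] G by (smt (verit) divide_right_mono)
  then have "(ln (G t) - ln (G t0)) / ln b \<le> a * (t - t0) / ((1 + a * t0) * L * G t0) / ln b"
    using assms by (intro divide_right_mono) auto
  then show ?thesis unfolding log_def by (simp add: diff_divide_distrib)
qed

lemma sum_log_index_bound_le:
  fixes t :: "'a \<Rightarrow> real"
  assumes "finite A" "A \<noteq> {}" "b > 1" "a > 0" "L > 0" "-L < c"
    and t: "\<And>i. i \<in> A \<Longrightarrow> t i \<ge> 0" and T: "(\<Sum>i\<in>A. t i) \<le> real (card A) * T"
  shows "(\<Sum>i\<in>A. log b (index_bound c L a (t i))) \<le> real (card A) * log b (index_bound c L a T)"
proof -
  define G where "G = index_bound c L a"
  define n where "n = real (card A)"
  have n: "n > 0" using assms by (simp add: n_def card_gt_0_iff)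
  define t0 where "t0 = (\<Sum>i\<in>A. t i) / n"
  have t0: "t0 \<ge> 0" unfolding t0_def using t n by (simp add: sum_nonneg)
  have "t0 \<le> T" unfolding t0_def using T n by (simp add: n_def divide_le_eq mult.commute)
  then have "G t0 \<le> G T" "1 < G t0"
    unfolding G_def using index_bound_mono index_bound_gt_one t0 assms by auto
  then have G_t0: "log b (G t0) \<le> log b (G T)"
    using assms(3) by (subst log_le_cancel_iff) auto
  define K where "K = a / ((1 + a * t0) * L * G t0 * ln b)"
  have "(\<Sum>i\<in>A. log b (G (t i))) \<le> (\<Sum>i\<in>A. log b (G t0) + K * (t i - t0))"
    using log_index_bound_le_tangent[OF assms(3-6) t t0] unfolding G_def K_def
    by (intro sum_mono) simp
  also have "\<dots> = n * log b (G t0)"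
    using n by (simp add: sum.distrib sum_subtractf sum_distrib_left[symmetric] t0_def n_def)
  also have "\<dots> \<le> n * log b (G T)"
    using G_t0 n by simp
  finally show ?thesis unfolding G_def n_def .
qed

lemma vec_cost_le:
  fixes t :: "'n::finite \<Rightarrow> real" and k :: "'n \<Rightarrow> int"
  assumes "S \<ge> 2" "a > 0" "L > 0" "-L < c" "\<And>i. t i \<ge> 0"
    and k: "\<And>i. 1 + real_of_int \<bar>k i\<bar> \<le> index_bound c L a (t i)"
    and "(\<Sum>i\<in>UNIV. t i) \<le> real CARD('n) * T"
  shows "vec_cost S k \<le> 3 * real CARD('n) * log 2 (real S + 1)
           + real CARD('n) * log 2 (real S + 1) * log (real S) (index_bound c L a T)"
proof -
  have S: "real S > 1" using assms by simp
  have "vec_cost S k \<le> (\<Sum>i\<in>UNIV. 3 + log (real S) (1 + real_of_int \<bar>k i\<bar>)) * log 2 (real S + 1)"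
    unfolding vec_cost_def sum_distrib_right
    using index_cost_le[OF assms(1)] by (intro sum_mono) auto
  also have "\<dots> \<le> (\<Sum>i\<in>UNIV. 3 + log (real S) (index_bound c L a (t i))) * log 2 (real S + 1)"
    using k S less_trans[OF zero_less_one index_bound_gt_one[OF assms(2-4) assms(5)]]
    by (intro mult_right_mono sum_mono add_left_mono log_le_cancel_iff[THEN iffD2]) auto
  also have "\<dots> \<le> (3 * real CARD('n) + real CARD('n) * log (real S) (index_bound c L a T))
                   * log 2 (real S + 1)"
    using sum_log_index_bound_le[of "UNIV :: 'n set" "real S"] assms S
    by (intro mult_right_mono) (auto simp: sum.distrib)
  finally show ?thesis by (simp add: algebra_simps)
qed

lemma sum_abs_le_card_mult_norm_div_sqrt_card:
  fixes x :: "real ^ 'n"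
  shows "(\<Sum>i\<in>UNIV. \<bar>x $ i\<bar>) \<le> real CARD('n) * (norm x / sqrt (real CARD('n)))"
proof -
  have "(\<Sum>i\<in>UNIV. \<bar>x $ i\<bar>) \<le> sqrt (real CARD('n)) * norm x"
    using L2_set_mult_ineq[of "\<lambda>i. \<bar>x $ i\<bar>" "\<lambda>_. 1" UNIV]
    by (simp add: norm_vec_def L2_set_constant mult.commute)
  also have "\<dots> = real CARD('n) / sqrt (real CARD('n)) * norm x"
    by (simp add: real_div_sqrt)
  finally show ?thesis by simp
qed

lemma abs_det_index_le:
  assumes "\<eta> > 0" "0 < \<omega>" "\<omega> < 1"
  shows "1 + real_of_int \<bar>det_index \<eta> \<omega> y\<bar>
           \<le> index_bound (ln (1 - \<omega>)) (ln (1 + \<omega>) - ln (1 - \<omega>)) (\<omega> / \<eta>) \<bar>y\<bar>"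
proof -
  define L where "L = ln (1 + \<omega>) - ln (1 - \<omega>)"
  define f where "f = (ln (1 - \<omega>) + ln (1 + \<omega> / \<eta> * \<bar>y\<bar>)) / L"
  have "ln (1 + \<omega>) > 0" "ln (1 - \<omega>) < 0" "ln (1 + \<omega> / \<eta> * \<bar>y\<bar>) \<ge> 0"
    using assms by simp_all
  then have "L > 0" "f > -1" unfolding f_def L_def by (simp_all add: field_simps)
  have "det_index \<eta> \<omega> y = (if y > 0 then 1 else if y < 0 then -1 else 0) * \<lceil>f\<rceil>"
    unfolding det_index_def f_def L_def by (simp add: mult.commute)
  then have "\<bar>det_index \<eta> \<omega> y\<bar> \<le> \<lceil>f\<rceil>" using \<open>f > -1\<close> by auto
  then show ?thesis unfolding index_bound_def f_def L_def by linarith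
qed

lemma abs_prob_index_nonneg_le:
  assumes "\<eta> > 0" "0 < \<omega>" "\<omega> < 1" "y \<ge> 0" "k \<in> set_pmf (prob_index_nonneg \<eta> \<omega> y)"
  shows "1 + real_of_int \<bar>k\<bar> \<le> index_bound 0 (2 * ln (sqrt (1 + \<omega>^2) + \<omega>)) (\<omega> / \<eta>) y"
proof -
  define L where "L = 2 * ln (sqrt (1 + \<omega>^2) + \<omega>)"
  define f where "f = ln (1 + \<omega> * y / \<eta>) / L"
  have "sqrt (1 + \<omega>^2) \<ge> 1" by simp
  then have "sqrt (1 + \<omega>^2) + \<omega> > 1" using assms by linarith
  then have "L > 0" unfolding L_def by simp
  moreover have "ln (1 + \<omega> * y / \<eta>) \<ge> 0" using assms by simp
  ultimately have "f \<ge> 0" unfolding f_def by simp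
  have "k = 0 \<or> k = \<lceil>f\<rceil> \<or> k = \<lceil>f\<rceil> - 1"
    using assms(5) by (auto simp: prob_index_nonneg_def Let_def f_def L_def split: if_splits)
  then have "real_of_int \<bar>k\<bar> \<le> f + 1" using \<open>f \<ge> 0\<close> by (auto; linarith)
  then show ?thesis unfolding index_bound_def f_def L_def by (simp add: mult.commute)
qed

lemma abs_prob_index_le:
  assumes "\<eta> > 0" "0 < \<omega>" "\<omega> < 1" "k \<in> set_pmf (prob_index \<eta> \<omega> y)"
  shows "1 + real_of_int \<bar>k\<bar> \<le> index_bound 0 (2 * ln (sqrt (1 + \<omega>^2) + \<omega>)) (\<omega> / \<eta>) \<bar>y\<bar>"
  using assms abs_prob_index_nonneg_le[OF assms(1-3), of "\<bar>y\<bar>"]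
  by (cases "y \<ge> 0") (auto simp: prob_index_def)

lemma vec_cost_det_index_le:
  fixes x :: "real ^ 'n"
  assumes "\<eta> > 0" "0 < \<omega>" "\<omega> < 1" "S \<ge> 2"
  shows "vec_cost S (\<lambda>i. det_index \<eta> \<omega> (x $ i))
           \<le> 3 * real CARD('n) * log 2 (real S + 1)
             + real CARD('n) * log 2 (real S + 1) * log (real S)
                 (index_bound (ln (1 - \<omega>)) (ln (1 + \<omega>) - ln (1 - \<omega>)) (\<omega> / \<eta>)
                   (norm x / sqrt (real CARD('n))))"
proof (rule vec_cost_le[OF assms(4) _ _ _ abs_ge_zero abs_det_index_le[OF assms(1-3)]
      sum_abs_le_card_mult_norm_div_sqrt_card])
  have "ln (1 + \<omega>) > 0" "ln (1 - \<omega>) < 0" using assms by simp_all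
  then show "ln (1 + \<omega>) - ln (1 - \<omega>) > 0" "- (ln (1 + \<omega>) - ln (1 - \<omega>)) < ln (1 - \<omega>)"
    by linarith+
qed (use assms in simp)

lemma AE_vec_cost_prob_index_le:
  fixes x :: "real ^ 'n"
  assumes "\<eta> > 0" "0 < \<omega>" "\<omega> < 1" "S \<ge> 2"
  shows "AE k in measure_pmf (prob_index_vec \<eta> \<omega> x).
           vec_cost S k
           \<le> 3 * real CARD('n) * log 2 (real S + 1)
             + real CARD('n) * log 2 (real S + 1) * log (real S)
                 (index_bound 0 (2 * ln (sqrt (1 + \<omega>^2) + \<omega>)) (\<omega> / \<eta>)
                   (norm x / sqrt (real CARD('n))))"
    (is "AE k in _. vec_cost S k \<le> ?bound")
proof (rule AE_pmfI)
  fix k assume "k \<in> set_pmf (prob_index_vec \<eta> \<omega> x)"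
  then have k: "k i \<in> set_pmf (prob_index \<eta> \<omega> (x $ i))" for i
    by (simp add: prob_index_vec_def set_Pi_pmf PiE_dflt_def)
  have "sqrt (1 + \<omega>^2) \<ge> 1" by simp
  then have "sqrt (1 + \<omega>^2) + \<omega> > 1" using assms by linarith
  then have "2 * ln (sqrt (1 + \<omega>^2) + \<omega>) > 0" by simp
  then show "vec_cost S k \<le> ?bound"
    using assms by (intro vec_cost_le[OF assms(4) _ _ _ abs_ge_zero
      abs_prob_index_le[OF assms(1-3) k] sum_abs_le_card_mult_norm_div_sqrt_card]) simp_all
qed

theorem lemma3:
  fixes \<eta> \<omega> :: real and S :: nat and x :: "real ^ 'n"
  assumes "\<eta> > 0" and "0 < \<omega>" and "\<omega> < 1" and "S \<ge> 2"
  shows "(vec_cost S (\<lambda>i. det_index \<eta> \<omega> (x $ i))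
           \<le> 3 * real CARD('n) * log 2 (real S + 1)
             + real CARD('n) * log 2 (real S + 1) *
               log (real S) (2 + (ln (1 - \<omega>) + ln (1 + \<omega> * norm x / (sqrt (real CARD('n)) * \<eta>)))
                                 / (ln (1 + \<omega>) - ln (1 - \<omega>))))
    \<and> (AE k in measure_pmf (prob_index_vec \<eta> \<omega> x).
           vec_cost S k
           \<le> 3 * real CARD('n) * log 2 (real S + 1)
             + real CARD('n) * log 2 (real S + 1) *
               log (real S) (2 + ln (1 + \<omega> * norm x / (sqrt (real CARD('n)) * \<eta>))
                                 / (2 * ln (sqrt (1 + \<omega>^2) + \<omega>))))"
proof -
  have bound: "index_bound c L (\<omega> / \<eta>) (norm x / sqrt (real CARD('n)))
      = 2 + (c + ln (1 + \<omega> * norm x / (sqrt (real CARD('n)) * \<eta>))) / L" for c L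
    by (simp add: index_bound_def mult.commute)
  from vec_cost_det_index_le[OF assms, of x] AE_vec_cost_prob_index_le[OF assms, of x]
  show ?thesis unfolding bound add_0_left by (rule conjI)
qed

end
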